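(* Let $m\ge 1$ and let $k_1,l_1,\dots,k_m,l_m\in\mathbb{Z}_{\ge 0}$ with $k_1\ge 1$ and $l_m\ge 1$. Put $L_0=0$, $L_i=l_1+\dots+l_i$, and write $L=L_m$. For $\lambda\in\mathbb{C}\setminus\mathbb{Z}_{\ge 1}$ let $$f(\{k_i,l_i\}_{i=1}^m;\lambda)=\sum_{n_1>n_2>\dots>n_{L}>0}\ \prod_{i=1}^m\frac{1}{n_{L_{i-1}+1}^{\,k_i}\,(n_{L_{i-1}+1}-\lambda)(n_{L_{i-1}+2}-\lambda)\cdots(n_{L_i}-\lambda)},$$ the sum over integers, where for $l_i=0$ the product of the factors $(n_r-\lambda)$, $L_{i-1}<r\le L_i$, is empty (so that, since then $L_{i-1}=L_i$, the factor $n_{L_{i-1}+1}^{k_i}$ is a power of the first index of the next block). For integers $n_1>\dots>n_L>0$ and $1\le j\le L$ set $$C_{n_j}^{n_1\dots n_L}=\frac{1}{n_1^{k_1}\,n_{L_1+1}^{k_2}\cdots n_{L_{m-1}+1}^{k_m}}\prod_{\substack{1\le i\le L\\ i\neq j}}\frac{1}{n_i-n_j}.$$ Then for every $\lambda\in\mathbb{C}\setminus\mathbb{Z}_{\ge1}$, $$f(\{k_i,l_i\}_{i=1}^m;\lambda)=\sum_{n=1}^\infty\left\{\sum_{j=1}^{L}\ \sum_{\substack{n_1>\dots>n_{j-1}>n>n_{j+1}>\dots>n_L>0}} C_{n}^{n_1\dots n_{j-1}\,n\,n_{j+1}\dots n_L}\right\}\frac{1}{n-\lambda},$$ where in the inner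 sum $n$ occupies the $j$-th position and the remaining $n_i$ range over integers.
   Context: This $f$ is the generating function (in the weight increase, via $\lambda$) of sums of multiple zeta values $\zeta(k_1,\dots,k_r)=\sum_{n_1>\dots>n_r>0}n_1^{-k_1}\cdots n_r^{-k_r}$; the series defining $f$ converges absolutely for $\lambda$ not a positive integer. *)

theory Defs
  imports "HOL-Analysis.Analysis"
begin

text \<open>Index tuples \<open>n_1 > n_2 > ... > n_L > 0\<close> are represented as lists \<open>xs\<close> of
  length \<open>L\<close>; \<open>n_r\<close> is \<open>xs ! (r - 1)\<close> (0-based list indexing).\<close>

definition Lsum :: "(nat \<Rightarrow> nat) \<Rightarrow> nat \<Rightarrow> nat" where
  "Lsum l i = (\<Sum>t = 1..i. l t)"

definition dec_tuples :: "nat \<Rightarrow> nat list set" where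
  "dec_tuples L = {xs. length xs = L \<and> sorted_wrt (>) xs \<and> (\<forall>x\<in>set xs. 0 < x)}"

definition f_term :: "(nat \<Rightarrow> nat) \<Rightarrow> (nat \<Rightarrow> nat) \<Rightarrow> nat \<Rightarrow> complex \<Rightarrow> nat list \<Rightarrow> complex" where
  "f_term k l m z xs =
     (\<Prod>i = 1..m. 1 / ((of_nat (xs ! Lsum l (i - 1))) ^ k i *
        (\<Prod>r \<in> {Lsum l (i - 1)..<Lsum l i}. (of_nat (xs ! r) - z))))"

definition f_mzv :: "(nat \<Rightarrow> nat) \<Rightarrow> (nat \<Rightarrow> nat) \<Rightarrow> nat \<Rightarrow> complex \<Rightarrow> complex" where
  "f_mzv k l m z = infsum (f_term k l m z) (dec_tuples (Lsum l m))"

text \<open>\<open>C_{n_j}^{n_1 ... n_L}\<close>, with \<open>j\<close> given 0-based (\<open>j < L\<close>).\<close>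
definition Ccoef :: "(nat \<Rightarrow> nat) \<Rightarrow> (nat \<Rightarrow> nat) \<Rightarrow> nat \<Rightarrow> nat list \<Rightarrow> nat \<Rightarrow> complex" where
  "Ccoef k l m xs j =
     (1 / (\<Prod>i = 1..m. (of_nat (xs ! Lsum l (i - 1))) ^ k i)) *
     (\<Prod>i \<in> {0..<Lsum l m} - {j}. 1 / (of_nat (xs ! i) - of_nat (xs ! j)))"

definition coef_rhs :: "(nat \<Rightarrow> nat) \<Rightarrow> (nat \<Rightarrow> nat) \<Rightarrow> nat \<Rightarrow> nat \<Rightarrow> complex" where
  "coef_rhs k l m n =
     (\<Sum>j < Lsum l m. infsum (\<lambda>xs. Ccoef k l m xs j)
                         {xs \<in> dec_tuples (Lsum l m). xs ! j = n})"

end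

theory Submission
  imports Defs
begin

text \<open>Partial fractions in \<open>\<lambda>\<close> turn each summand of \<open>f\<close> into
  \<open>\<Sum>\<^sub>j C_{n_j} / (n_j - \<lambda>)\<close>; the identity then follows by regrouping the resulting double
  series by the position \<open>j\<close> and the value \<open>n = n_j\<close>, which needs absolute convergence.
  For fixed \<open>j\<close> let \<open>y_j = n_j\<close> and \<open>y_i = |n_i - n_j|\<close> for \<open>i \<noteq> j\<close>. The map \<open>n \<mapsto> y\<close> is
  injective on decreasing tuples and every \<open>y_i\<close> is at most \<open>n_1 \<le> n_1^{k_1}\<close>, so
  \<open>|C_{n_j}| / n_j \<le> 1 / (n_1 \<Prod>\<^sub>i y_i) \<le> \<Prod>\<^sub>i y_i^{-1-1/L}\<close>, a product of \<open>L\<close> convergent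
  series. Finally \<open>|n - \<lambda>| \<ge> n / c\<close> for some constant \<open>c\<close>, as \<open>\<lambda>\<close> is not a positive integer.\<close>

lemma has_sum_sum:
  fixes f :: "'i \<Rightarrow> 'a \<Rightarrow> 'b::topological_comm_monoid_add"
  assumes "finite I" "\<And>i. i \<in> I \<Longrightarrow> (f i has_sum s i) A"
  shows "((\<lambda>x. \<Sum>i\<in>I. f i x) has_sum (\<Sum>i\<in>I. s i)) A"
  using assms by (induction I rule: finite_induct) (auto intro: has_sum_add)

lemma infsum_fibres_sums:
  fixes g :: "'a \<Rightarrow> 'b::banach" and h :: "'a \<Rightarrow> nat"
  assumes "g summable_on A"
  shows "(\<lambda>n. infsum g {x \<in> A. h x = n}) sums infsum g A"
proof -
  define \<sigma> where "\<sigma> x = (h x, x)" for x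
  have "inj_on \<sigma> A" by (auto simp: inj_on_def \<sigma>_def)
  moreover have "\<sigma> ` A = Sigma UNIV (\<lambda>n. {x \<in> A. h x = n})"
    by (auto simp: \<sigma>_def image_iff)
  ultimately have "((\<lambda>p. g (snd p)) has_sum infsum g A) (Sigma UNIV (\<lambda>n. {x \<in> A. h x = n}))"
    using has_sum_reindex[of \<sigma> A "\<lambda>p. g (snd p)"] assms by (simp add: o_def \<sigma>_def)
  then have "((\<lambda>n. infsum g {x \<in> A. h x = n}) has_sum infsum g A) UNIV"
  proof (rule has_sum_SigmaD)
    fix n
    have "g summable_on {x \<in> A. h x = n}"
      using assms by (rule summable_on_subset_banach) auto
    then show "((\<lambda>x. g (snd (n, x))) has_sum infsum g {x \<in> A. h x = n}) {x \<in> A. h x = n}"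
      by simp
  qed
  then show ?thesis by (rule has_sum_imp_sums)
qed

lemma prod_one_div_partial_fractions:
  fixes a :: "'i \<Rightarrow> 'a::field"
  assumes "finite I" "I \<noteq> {}" "inj_on a I" "\<And>i. i \<in> I \<Longrightarrow> a i \<noteq> z"
  shows "(\<Prod>i\<in>I. 1 / (a i - z)) = (\<Sum>j\<in>I. (\<Prod>i\<in>I - {j}. 1 / (a i - a j)) / (a j - z))"
  using assms
proof (induction I arbitrary: z rule: finite_ne_induct)
  case (singleton x)
  then show ?case by simp
next
  case (insert x F)
  define c where "c j = (\<Prod>i\<in>F - {j}. 1 / (a i - a j))" for j
  have inj: "inj_on a F" and ne: "\<And>i. i \<in> F \<Longrightarrow> a i \<noteq> a x"
    using insert.prems insert.hyps by (auto simp: inj_on_def)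
  have nz: "\<And>i. i \<in> F \<Longrightarrow> a i \<noteq> z" "a x \<noteq> z" using insert.prems by auto
  have IH_z: "(\<Prod>i\<in>F. 1 / (a i - z)) = (\<Sum>j\<in>F. c j / (a j - z))"
    using insert.IH[OF inj nz(1)] by (simp add: c_def)
  have IH_x: "(\<Prod>i\<in>F. 1 / (a i - a x)) = (\<Sum>j\<in>F. c j / (a j - a x))"
    using insert.IH[OF inj ne] by (simp add: c_def)
  have coeff: "(\<Prod>i\<in>insert x F - {j}. 1 / (a i - a j)) = c j / (a x - a j)" if "j \<in> F" for j
  proof -
    have "insert x F - {j} = insert x (F - {j})" using that insert.hyps by auto
    then show ?thesis using insert.hyps by (simp add: c_def)
  qed
  have split: "(\<Prod>i\<in>insert x F - {j}. 1 / (a i - a j)) / (a j - z)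
      = (c j / (a j - z) - c j / (a j - a x)) / (a x - z)" if "j \<in> F" for j
    using coeff[OF that] ne[OF that] nz(1)[OF that] nz(2)
    by (simp add: divide_simps) (simp add: algebra_simps)
  have "(\<Sum>j\<in>insert x F. (\<Prod>i\<in>insert x F - {j}. 1 / (a i - a j)) / (a j - z))
      = (\<Prod>i\<in>F. 1 / (a i - a x)) / (a x - z)
        + (\<Sum>j\<in>F. c j / (a j - z) - c j / (a j - a x)) / (a x - z)"
    using insert.hyps by (simp add: split sum_divide_distrib Diff_insert_absorb cong: sum.cong)
  also have "\<dots> = (\<Prod>i\<in>F. 1 / (a i - z)) / (a x - z)"
    by (simp add: IH_z IH_x sum_subtractf diff_divide_distrib)
  also have "\<dots> = (\<Prod>i\<in>insert x F. 1 / (a i - z))"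
    using insert.hyps by simp
  finally show ?case ..
qed

lemma Lsum_Suc: "Lsum l (Suc i) = Lsum l i + l (Suc i)"
  by (simp add: Lsum_def)

lemma Lsum_mono: "i \<le> j \<Longrightarrow> Lsum l i \<le> Lsum l j"
  unfolding Lsum_def by (intro sum_mono2) auto

lemma Lsum_pred_less:
  assumes "1 \<le> i" "i \<le> m" "1 \<le> l m"
  shows "Lsum l (i - 1) < Lsum l m"
proof -
  have "Lsum l (i - 1) \<le> Lsum l (m - 1)" using assms by (intro Lsum_mono) auto
  also have "\<dots> < Lsum l m" using assms Lsum_Suc[of l "m - 1"] by simp
  finally show ?thesis .
qed

lemma prod_Lsum_blocks:
  "(\<Prod>i = 1..m. \<Prod>r\<in>{Lsum l (i - 1)..<Lsum l i}. F r) = (\<Prod>r<Lsum l m. F r)"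
proof (induction m)
  case 0
  then show ?case by (simp add: Lsum_def)
next
  case (Suc m)
  then show ?case
    by (simp add: prod.cl_ivl_Suc lessThan_atLeast0 prod.atLeastLessThan_concat Lsum_mono Lsum_Suc)
qed

lemma f_term_eq_prod_div:
  "f_term k l m z xs = (\<Prod>r<Lsum l m. 1 / (of_nat (xs ! r) - z))
     / (\<Prod>i = 1..m. (of_nat (xs ! Lsum l (i - 1))) ^ k i)"
  unfolding f_term_def prod_dividef[symmetric] prod.distrib prod_Lsum_blocks[symmetric]
  by (simp add: prod_dividef ac_simps)

lemma dec_tuples_nth_less:
  assumes "xs \<in> dec_tuples L" "i < j" "j < L"
  shows "xs ! j < xs ! i"
  using assms sorted_wrt_nth_less[of "(>)" xs i j] by (auto simp: dec_tuples_def)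

lemma dec_tuples_nth_pos:
  assumes "xs \<in> dec_tuples L" "i < L"
  shows "0 < xs ! i"
  using assms by (auto simp: dec_tuples_def)

lemma dec_tuples_nth_le_nth0:
  assumes "xs \<in> dec_tuples L" "i < L"
  shows "xs ! i \<le> xs ! 0"
  using dec_tuples_nth_less[OF assms(1), of 0 i] assms(2) by (cases i) auto

lemma inj_on_nth_dec_tuples:
  assumes "xs \<in> dec_tuples L"
  shows "inj_on (\<lambda>i. xs ! i) {..<L}"
  using dec_tuples_nth_less[OF assms] by (intro inj_onI) (metis lessThan_iff linorder_neqE_nat less_irrefl)

lemma f_term_partial_fractions:
  assumes "xs \<in> dec_tuples (Lsum l m)" "0 < Lsum l m" "\<forall>n\<ge>1. z \<noteq> of_nat n"
  shows "f_term k l m z xs = (\<Sum>j<Lsum l m. Ccoef k l m xs j / (of_nat (xs ! j) - z))"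
proof -
  have "inj_on (\<lambda>i. of_nat (xs ! i) :: complex) {..<Lsum l m}"
    using inj_on_nth_dec_tuples[OF assms(1)] by (simp add: inj_on_def)
  moreover have "of_nat (xs ! i) \<noteq> z" if "i < Lsum l m" for i
    using assms(3) dec_tuples_nth_pos[OF assms(1) that] by (auto simp: Suc_le_eq)
  ultimately show ?thesis
    using prod_one_div_partial_fractions[of "{..<Lsum l m}" "\<lambda>i. of_nat (xs ! i) :: complex" z] assms(2)
    unfolding f_term_eq_prod_div Ccoef_def
    by (simp add: sum_divide_distrib lessThan_atLeast0 mult.commute)
qed

definition dist_profile :: "nat list \<Rightarrow> nat \<Rightarrow> nat list" where
  "dist_profile xs j =
     map (\<lambda>x. if x = xs ! j then x else if xs ! j < x then x - xs ! j else xs ! j - x) xs"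

lemma length_dist_profile [simp]: "length (dist_profile xs j) = length xs"
  by (simp add: dist_profile_def)

lemma dist_profile_nth:
  assumes "xs \<in> dec_tuples L" "i < L" "j < L"
  shows "dist_profile xs j ! i =
           (if i = j then xs ! j else if i < j then xs ! i - xs ! j else xs ! j - xs ! i)"
proof -
  have "length xs = L" using assms(1) by (simp add: dec_tuples_def)
  moreover have "i < j \<Longrightarrow> xs ! j < xs ! i" "j < i \<Longrightarrow> xs ! i < xs ! j"
    using dec_tuples_nth_less assms by blast+
  ultimately show ?thesis
    using assms(2,3) by (cases i j rule: linorder_cases) (auto simp: dist_profile_def)
qed

lemma dist_profile_nth_pos:
  assumes "xs \<in> dec_tuples L" "i < L" "j < L"
  shows "0 < dist_profile xs j ! i"
  using dist_profile_nth[OF assms] dec_tuples_nth_pos[OF assms(1)] assms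
    dec_tuples_nth_less[OF assms(1), of i j] dec_tuples_nth_less[OF assms(1), of j i]
  by auto

lemma dist_profile_nth_le_nth0:
  assumes "xs \<in> dec_tuples L" "i < L" "j < L"
  shows "dist_profile xs j ! i \<le> xs ! 0"
  using dist_profile_nth[OF assms] dec_tuples_nth_le_nth0[OF assms(1)] assms
  by (auto intro: le_trans[OF diff_le_self])

lemma norm_diff_eq_dist_profile_nth:
  assumes "xs \<in> dec_tuples L" "i < L" "j < L" "i \<noteq> j"
  shows "norm (of_nat (xs ! i) - of_nat (xs ! j) :: complex) = real (dist_profile xs j ! i)"
proof -
  have "norm (of_nat (xs ! i) - of_nat (xs ! j) :: complex) = \<bar>real (xs ! i) - real (xs ! j)\<bar>"
    by (metis norm_of_real of_real_diff of_real_of_nat_eq)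
  then show ?thesis
    using dist_profile_nth[OF assms(1-3)] assms
      dec_tuples_nth_less[OF assms(1), of i j] dec_tuples_nth_less[OF assms(1), of j i]
    by (auto simp: of_nat_diff)
qed

lemma inj_on_dist_profile:
  assumes "j < L"
  shows "inj_on (\<lambda>xs. dist_profile xs j) (dec_tuples L)"
proof (rule inj_onI)
  fix xs ys
  assume xs: "xs \<in> dec_tuples L" and ys: "ys \<in> dec_tuples L"
    and eq: "dist_profile xs j = dist_profile ys j"
  have len: "length xs = L" "length ys = L" using xs ys by (auto simp: dec_tuples_def)
  have eq_nth: "dist_profile xs j ! i = dist_profile ys j ! i" for i
    using eq by simp
  have eq_j: "xs ! j = ys ! j"
    using eq_nth[of j] dist_profile_nth[OF xs assms assms] dist_profile_nth[OF ys assms assms] by simp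
  show "xs = ys"
  proof (rule nth_equalityI)
    fix i assume "i < length xs"
    then have i: "i < L" using len by simp
    show "xs ! i = ys ! i"
      using eq_nth[of i] eq_j dist_profile_nth[OF xs i assms] dist_profile_nth[OF ys i assms]
        dec_tuples_nth_less[OF xs, of i j] dec_tuples_nth_less[OF ys, of i j]
        dec_tuples_nth_less[OF xs, of j i] dec_tuples_nth_less[OF ys, of j i] i assms
      by (auto split: if_splits)
  qed (use len in simp)
qed

lemma prod_inverse_div_le_prod_powr:
  fixes y :: "'i \<Rightarrow> real"
  assumes "finite I" "I \<noteq> {}" "\<And>i. i \<in> I \<Longrightarrow> 0 < y i" "\<And>i. i \<in> I \<Longrightarrow> y i \<le> P"
  shows "(\<Prod>i\<in>I. 1 / y i) / P \<le> (\<Prod>i\<in>I. y i powr - (1 + 1 / real (card I)))"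
proof -
  define e where "e = 1 / real (card I)"
  have P: "0 < P" using assms(2-4) by (meson all_not_in_conv less_le_trans)
  have "(\<Prod>i\<in>I. P powr - e) = (P powr - e) ^ card I"
    by (rule prod_constant)
  also have "\<dots> = P powr (real (card I) * - e)"
    using P by (intro powr_power) simp
  also have "\<dots> = 1 / P"
    using P assms(1,2) by (simp add: e_def powr_minus_divide)
  finally have "1 / P = (\<Prod>i\<in>I. P powr - e)" ..
  also have "\<dots> \<le> (\<Prod>i\<in>I. y i powr - e)"
    using assms(3,4) by (intro prod_mono conjI powr_mono2') (auto simp: e_def)
  finally have "1 / P * (\<Prod>i\<in>I. 1 / y i) \<le> (\<Prod>i\<in>I. y i powr - e) * (\<Prod>i\<in>I. 1 / y i)"
    by (rule mult_right_mono) (use assms(3) in \<open>simp add: prod_nonneg less_imp_le\<close>)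
  also have "\<dots> = (\<Prod>i\<in>I. y i powr - (1 + e))"
    unfolding prod.distrib[symmetric]
  proof (intro prod.cong refl)
    fix i assume "i \<in> I"
    then have "0 < y i" by (rule assms(3))
    then show "y i powr - e * (1 / y i) = y i powr - (1 + e)"
      by (simp add: powr_diff powr_minus_divide)
  qed
  finally show ?thesis by (simp add: e_def)
qed

lemma nth0_le_Ccoef_denom:
  assumes "1 \<le> m" "1 \<le> k 1" "1 \<le> l m" "xs \<in> dec_tuples (Lsum l m)"
  shows "xs ! 0 \<le> (\<Prod>i = 1..m. (xs ! Lsum l (i - 1)) ^ k i)"
proof (rule dvd_imp_le)
  have "xs ! 0 dvd (xs ! Lsum l (1 - 1)) ^ k 1"
    using assms(2) by (simp add: Lsum_def)
  also have "\<dots> dvd (\<Prod>i = 1..m. (xs ! Lsum l (i - 1)) ^ k i)"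
    using assms(1) by (intro dvd_prodI) auto
  finally show "xs ! 0 dvd (\<Prod>i = 1..m. (xs ! Lsum l (i - 1)) ^ k i)" .
  show "0 < (\<Prod>i = 1..m. (xs ! Lsum l (i - 1)) ^ k i)"
    using dec_tuples_nth_pos[OF assms(4) Lsum_pred_less] assms(3) by (intro prod_pos) auto
qed

lemma norm_Ccoef_div_nth:
  assumes "xs \<in> dec_tuples (Lsum l m)" "j < Lsum l m"
  shows "norm (Ccoef k l m xs j) / real (xs ! j)
           = (\<Prod>i<Lsum l m. 1 / real (dist_profile xs j ! i))
             / real (\<Prod>i = 1..m. (xs ! Lsum l (i - 1)) ^ k i)"
proof -
  define L where "L = Lsum l m"
  have L: "xs \<in> dec_tuples L" "j < L" using assms by (simp_all add: L_def)
  have "norm (\<Prod>i\<in>{0..<L} - {j}. 1 / (of_nat (xs ! i) - of_nat (xs ! j)) :: complex)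
      = (\<Prod>i\<in>{..<L} - {j}. 1 / real (dist_profile xs j ! i))"
    unfolding prod_norm[symmetric] norm_divide lessThan_atLeast0
    using norm_diff_eq_dist_profile_nth[OF L(1) _ L(2)] by (intro prod.cong) auto
  then have "norm (Ccoef k l m xs j)
      = (\<Prod>i\<in>{..<L} - {j}. 1 / real (dist_profile xs j ! i))
        / real (\<Prod>i = 1..m. (xs ! Lsum l (i - 1)) ^ k i)"
    unfolding Ccoef_def L_def[symmetric] by (simp add: norm_mult norm_divide prod_norm[symmetric] norm_power)
  moreover have "dist_profile xs j ! j = xs ! j"
    using dist_profile_nth[OF L(1) L(2) L(2)] by simp
  ultimately show ?thesis
    using prod.remove[of "{..<L}" j "\<lambda>i. 1 / real (dist_profile xs j ! i)"] L(2)
    by (simp add: L_def field_simps)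
qed

lemma Ccoef_bound:
  assumes "1 \<le> m" "1 \<le> k 1" "1 \<le> l m" "xs \<in> dec_tuples (Lsum l m)" "j < Lsum l m"
  shows "norm (Ccoef k l m xs j) / real (xs ! j)
           \<le> (\<Prod>y\<leftarrow>dist_profile xs j. real y powr - (1 + 1 / real (Lsum l m)))"
proof -
  define L where "L = Lsum l m"
  define d where "d i = real (dist_profile xs j ! i)" for i
  have xs: "xs \<in> dec_tuples L" "length xs = L" and j: "j < L"
    using assms(4,5) by (simp_all add: L_def dec_tuples_def)
  have "norm (Ccoef k l m xs j) / real (xs ! j)
      = (\<Prod>i<L. 1 / d i) / real (\<Prod>i = 1..m. (xs ! Lsum l (i - 1)) ^ k i)"
    using norm_Ccoef_div_nth[OF assms(4,5)] by (simp add: L_def d_def)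
  also have "\<dots> \<le> (\<Prod>i<L. d i powr - (1 + 1 / real (card {..<L})))"
  proof (rule prod_inverse_div_le_prod_powr)
    fix i assume "i \<in> {..<L}"
    then have "i < L" by simp
    then show "0 < d i" "d i \<le> real (\<Prod>i = 1..m. (xs ! Lsum l (i - 1)) ^ k i)"
      using dist_profile_nth_pos[OF xs(1) _ j] dist_profile_nth_le_nth0[OF xs(1) _ j]
        nth0_le_Ccoef_denom[of m k l, OF assms(1-4)] unfolding d_def of_nat_le_iff
      by (auto intro: le_trans)
  qed (use j in auto)
  also have "\<dots> = (\<Prod>y\<leftarrow>dist_profile xs j. real y powr - (1 + 1 / real L))"
    by (simp add: prod.list_conv_set_nth xs(2) d_def lessThan_atLeast0)
  finally show ?thesis by (simp add: L_def)
qed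

lemma has_sum_prod_list_lists:
  fixes w :: "'a \<Rightarrow> real"
  assumes w: "(w has_sum S) UNIV" and nonneg: "\<And>x. 0 \<le> w x"
  shows "((\<lambda>ys. \<Prod>y\<leftarrow>ys. w y) has_sum S ^ L) {ys. length ys = L}"
proof (induction L)
  case 0
  have "{ys :: 'a list. length ys = 0} = {[]}" by auto
  then show ?case by (simp add: has_sum_finiteI)
next
  case (Suc L)
  define T where "T = {ys :: 'a list. length ys = L}"
  define f where "f = (\<lambda>(x, ys). w x * (\<Prod>y\<leftarrow>ys. w y))"
  have cons_image: "{ys. length ys = Suc L} = (\<lambda>(x, ys). x # ys) ` (UNIV \<times> T)"
    unfolding T_def by (auto simp: length_Suc_conv image_iff)
  have inj: "inj_on (\<lambda>(x, ys). x # ys) (UNIV \<times> T)"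
    by (auto simp: inj_on_def)
  have inner: "((\<lambda>ys. f (x, ys)) has_sum w x * S ^ L) T" for x
    using Suc.IH unfolding T_def f_def by (simp add: has_sum_cmult_right)
  have outer: "((\<lambda>x. w x * S ^ L) has_sum S * S ^ L) UNIV"
    using w by (rule has_sum_cmult_left)
  have "f summable_on UNIV \<times> T"
    using inner has_sum_imp_summable[OF outer] nonneg
    by (intro summable_on_SigmaI[where g = "\<lambda>x. w x * S ^ L"])
      (auto simp: f_def intro!: mult_nonneg_nonneg prod_list_nonneg)
  then have "(f has_sum S ^ Suc L) (UNIV \<times> T)"
    using has_sum_SigmaI[OF inner outer] by simp
  then show ?case
    unfolding cons_image has_sum_reindex[OF inj] by (simp add: f_def o_def case_prod_unfold)
qed

lemma summable_on_prod_list_powr: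
  assumes "1 < s"
  shows "(\<lambda>ys. \<Prod>y\<leftarrow>ys. real y powr - s) summable_on {ys. length ys = L}"
proof -
  have "summable (\<lambda>n. real n powr - s)"
    using assms by (subst summable_real_powr_iff) auto
  then have "((\<lambda>n. real n powr - s) has_sum (\<Sum>\<^sub>\<infinity>n. real n powr - s)) UNIV"
    by (intro has_sum_infsum norm_summable_imp_summable_on) auto
  then show ?thesis
    by (rule has_sum_imp_summable[OF has_sum_prod_list_lists]) auto
qed

lemma nat_le_const_mult_norm_diff:
  fixes z :: "'a::real_normed_algebra_1"
  assumes "\<And>n. 1 \<le> n \<Longrightarrow> z \<noteq> of_nat n"
  obtains c where "0 < c" "\<And>n. 1 \<le> n \<Longrightarrow> real n \<le> c * norm (of_nat n - z)"
proof
  define N where "N = nat \<lceil>2 * norm z\<rceil>"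
  define c where "c = 2 + (\<Sum>n = 1..N. real n / norm (of_nat n - z))"
  have sum_nonneg: "0 \<le> (\<Sum>n = 1..N. real n / norm (of_nat n - z))"
    by (intro sum_nonneg) auto
  then show "0 < c" by (simp add: c_def)
  fix n :: nat
  assume n: "1 \<le> n"
  then have pos: "0 < norm (of_nat n - z)" using assms by auto
  show "real n \<le> c * norm (of_nat n - z)"
  proof (cases "n \<le> N")
    case True
    then have "real n / norm (of_nat n - z) \<le> (\<Sum>n = 1..N. real n / norm (of_nat n - z))"
      using n by (intro member_le_sum) auto
    also have "\<dots> \<le> c" by (simp add: c_def)
    finally show ?thesis using pos by (simp add: divide_le_eq)
  next
    case False
    then have "2 * norm z < real n" by (simp add: N_def) linarith
    moreover have "real n - norm z \<le> norm (of_nat n - z)"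
      using norm_triangle_ineq2[of "of_nat n" z] by simp
    ultimately have "real n \<le> 2 * norm (of_nat n - z)" by linarith
    also have "\<dots> \<le> c * norm (of_nat n - z)"
      using sum_nonneg by (intro mult_right_mono) (auto simp: c_def)
    finally show ?thesis .
  qed
qed

lemma Ccoef_term_summable:
  assumes "1 \<le> m" "1 \<le> k 1" "1 \<le> l m" "\<forall>n\<ge>1. z \<noteq> of_nat n" "j < Lsum l m"
  shows "(\<lambda>xs. Ccoef k l m xs j / (of_nat (xs ! j) - z)) summable_on dec_tuples (Lsum l m)"
proof -
  define L where "L = Lsum l m"
  define W where "W ys = (\<Prod>y\<leftarrow>ys. real y powr - (1 + 1 / real L))" for ys
  have z: "\<And>n. 1 \<le> n \<Longrightarrow> z \<noteq> of_nat n" using assms(4) by blast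
  obtain c where c: "0 < c" "\<And>n. 1 \<le> n \<Longrightarrow> real n \<le> c * norm (of_nat n - z)"
    using nat_le_const_mult_norm_diff[OF z] by blast
  have jL: "j < L" using assms(5) by (simp add: L_def)
  have "W summable_on {ys. length ys = L}"
    unfolding W_def using jL by (intro summable_on_prod_list_powr) simp
  then have "W summable_on (\<lambda>xs. dist_profile xs j) ` dec_tuples L"
    by (rule summable_on_subset_banach) (auto simp: dec_tuples_def)
  then have "(\<lambda>xs. W (dist_profile xs j)) summable_on dec_tuples L"
    using summable_on_reindex[OF inj_on_dist_profile[OF jL], of W] by (simp add: o_def)
  then have majorant: "(\<lambda>xs. c * W (dist_profile xs j)) summable_on dec_tuples L"
    by (rule summable_on_cmult_right)
  have bound: "norm (Ccoef k l m xs j / (of_nat (xs ! j) - z)) \<le> c * W (dist_profile xs j)"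
    if xs: "xs \<in> dec_tuples L" for xs
  proof -
    have n: "1 \<le> xs ! j" using dec_tuples_nth_pos[OF xs] assms(5) by (simp add: L_def Suc_le_eq)
    have "real (xs ! j) / c \<le> norm (of_nat (xs ! j) - z)"
      using c(2)[OF n] c(1) by (simp add: divide_le_eq mult.commute)
    then have "norm (Ccoef k l m xs j / (of_nat (xs ! j) - z))
        \<le> norm (Ccoef k l m xs j) / (real (xs ! j) / c)"
      unfolding norm_divide
    proof (rule divide_left_mono)
      show "0 < norm (of_nat (xs ! j) - z) * (real (xs ! j) / c)"
        using z[OF n] c(1) n by simp
    qed simp_all
    also have "\<dots> = c * (norm (Ccoef k l m xs j) / real (xs ! j))"
      by simp
    also have "\<dots> \<le> c * W (dist_profile xs j)"
      using Ccoef_bound[of m k l xs j, OF assms(1-3) _ assms(5)] xs c(1)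
      by (intro mult_left_mono) (simp_all add: W_def L_def)
    finally show ?thesis .
  qed
  have "(\<lambda>xs. norm (Ccoef k l m xs j / (of_nat (xs ! j) - z))) summable_on dec_tuples L"
    using majorant by (rule summable_on_comparison_test) (simp_all add: bound)
  then show ?thesis
    unfolding L_def by (rule abs_summable_summable)
qed

lemma f_mzv_eq_sum_infsum:
  assumes "1 \<le> m" "1 \<le> k 1" "1 \<le> l m" "\<forall>n\<ge>1. z \<noteq> of_nat n"
  shows "f_mzv k l m z = (\<Sum>j<Lsum l m.
           infsum (\<lambda>xs. Ccoef k l m xs j / (of_nat (xs ! j) - z)) (dec_tuples (Lsum l m)))"
proof -
  define L where "L = Lsum l m"
  have L: "0 < L" using Lsum_pred_less[of 1 m l] assms(1,3) by (simp add: L_def)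
  have "((\<lambda>xs. \<Sum>j<L. Ccoef k l m xs j / (of_nat (xs ! j) - z))
          has_sum (\<Sum>j<L. infsum (\<lambda>xs. Ccoef k l m xs j / (of_nat (xs ! j) - z)) (dec_tuples L)))
        (dec_tuples L)"
    using Ccoef_term_summable[of m k l, OF assms] by (intro has_sum_sum) (auto simp: L_def)
  then have "(f_term k l m z has_sum
      (\<Sum>j<L. infsum (\<lambda>xs. Ccoef k l m xs j / (of_nat (xs ! j) - z)) (dec_tuples L))) (dec_tuples L)"
    by (rule has_sum_cong[THEN iffD1, rotated])
      (use f_term_partial_fractions[OF _ _ assms(4)] L in \<open>simp add: L_def\<close>)
  then show ?thesis
    unfolding f_mzv_def L_def by (rule infsumI)
qed

lemma infsum_Ccoef_term_fibre:
  "infsum (\<lambda>xs. Ccoef k l m xs j / (of_nat (xs ! j) - z)) {xs \<in> A. xs ! j = n}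
     = infsum (\<lambda>xs. Ccoef k l m xs j) {xs \<in> A. xs ! j = n} / (of_nat n - z)"
proof -
  have "infsum (\<lambda>xs. Ccoef k l m xs j / (of_nat (xs ! j) - z)) {xs \<in> A. xs ! j = n}
      = infsum (\<lambda>xs. Ccoef k l m xs j * inverse (of_nat n - z)) {xs \<in> A. xs ! j = n}"
    by (rule infsum_cong) (simp add: divide_inverse)
  then show ?thesis by (simp add: infsum_cmult_left' divide_inverse)
qed

lemma coef_rhs_0: "coef_rhs k l m 0 = 0"
  unfolding coef_rhs_def
proof (intro sum.neutral ballI)
  fix j assume "j \<in> {..<Lsum l m}"
  then have "{xs \<in> dec_tuples (Lsum l m). xs ! j = 0} = {}"
    using dec_tuples_nth_pos[of _ "Lsum l m" j] by auto
  then show "infsum (\<lambda>xs. Ccoef k l m xs j) {xs \<in> dec_tuples (Lsum l m). xs ! j = 0} = 0"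
    by (simp only: infsum_empty)
qed

theorem lemma2p6:
  fixes k l :: "nat \<Rightarrow> nat" and m :: nat and z :: complex
  assumes "m \<ge> 1" and "k 1 \<ge> 1" and "l m \<ge> 1"
    and "\<forall>n::nat. n \<ge> 1 \<longrightarrow> z \<noteq> of_nat n"
  shows "(\<lambda>n. coef_rhs k l m (Suc n) / (of_nat (Suc n) - z)) sums f_mzv k l m z"
proof -
  have "(\<lambda>n. \<Sum>j<Lsum l m. infsum (\<lambda>xs. Ccoef k l m xs j / (of_nat (xs ! j) - z))
                              {xs \<in> dec_tuples (Lsum l m). xs ! j = n})
        sums f_mzv k l m z"
    unfolding f_mzv_eq_sum_infsum[of m k l, OF assms]
    using Ccoef_term_summable[of m k l, OF assms]
    by (intro sums_sum infsum_fibres_sums) auto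
  then have "(\<lambda>n. coef_rhs k l m n / (of_nat n - z)) sums f_mzv k l m z"
    unfolding infsum_Ccoef_term_fibre by (simp add: coef_rhs_def sum_divide_distrib)
  then show ?thesis
    using sums_Suc_iff[of "\<lambda>n. coef_rhs k l m n / (of_nat n - z)"] by (simp add: coef_rhs_0)
qed

end
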